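(* Let $I,J\in\mathcal I$. Then there is a reconfiguration sequence between $I$ and $J$ if and only if $I$ and $J$ are $\vartriangleleft$-equivalent.
   Context: Let $(a_i)_{i=1,\dots,n}$ be a sequence of distinct integers between $1$ and $n$, and set $a_0=0$; write $A=(a_i)_{i=0,1,\dots,n}$. A set $I\subseteq\{0\}\cup[n]$ is feasible if $a_i<a_j$ for all $i,j\in I$ with $i<j$; $\mathcal I$ denotes the family of feasible sets of maximum cardinality. A reconfiguration sequence between $I$ and $J$ is a sequence of feasible sets $I_0=I,I_1,\dots,I_\ell=J$ such that for each $1\le i\le\ell$, $I_i=(I_{i-1}\cup\{j\})\setminus\{k\}$ for some $j\notin I_{i-1}$, $k\in I_{i-1}$. Patience sorting: start with empty piles $P_0,\dots,P_n$; for $i=0,1,\dots,n$ in order, put $a_i$ on top of the pile $P_j$ with smallest index $j$ such that $P_j$ is empty or the top element of $P_j$ is greater than $a_i$. Let $P_0,\dots,P_k$ be the resulting nonempty piles. Say $a_u$ is placed below $a_v$ on a pile if both lie on the same pile and $a_u$ was put there before $a_v$. For $I,J\in\mathcal I$, write $I\vartriangleleft J$ if $I\setminus J=\{u\}$ and $J\setminus I=\{v\}$ for some $u,v$ such that $a_u$ is placed strictly below $a_v$ on pile $P_i$ for some $1\le i\le k$. For $I\in\mathcal I$, $\mathcal M(I)\subseteq\mathcal I$ is the smallest family containing $I$ such that whenever $J\in\mathcal M(I)$ and $J'\vartriangleleft J$ then $J'\in\mathcal M(I)$. A set is $\vartriangleleft$-minimal if there is no $J\in\mathcal I$ with $J\vartriangleleft$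 it; each $\mathcal M(I)$ contains exactly one $\vartriangleleft$-minimal set. Two sets $I,J\in\mathcal I$ are $\vartriangleleft$-equivalent if the $\vartriangleleft$-minimal set in $\mathcal M(I)$ equals the $\vartriangleleft$-minimal set in $\mathcal M(J)$. *)

theory Defs
  imports Main
begin

text \<open>The sequence A = (a_0,...,a_n) is a function a :: nat => nat, only its values on {0..n} matter.
  Indices range over {0..n}.\<close>

definition feasible :: "(nat \<Rightarrow> nat) \<Rightarrow> nat \<Rightarrow> nat set \<Rightarrow> bool" where
  "feasible a n I \<longleftrightarrow> I \<subseteq> {0..n} \<and> (\<forall>i\<in>I. \<forall>j\<in>I. i < j \<longrightarrow> a i < a j)"

definition maxfeas :: "(nat \<Rightarrow> nat) \<Rightarrow> nat \<Rightarrow> nat set set" where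
  "maxfeas a n = {I. feasible a n I \<and> (\<forall>J. feasible a n J \<longrightarrow> card J \<le> card I)}"

definition reconf_seq :: "(nat \<Rightarrow> nat) \<Rightarrow> nat \<Rightarrow> nat set \<Rightarrow> nat set \<Rightarrow> bool" where
  "reconf_seq a n I J \<longleftrightarrow> (\<exists>L. L \<noteq> [] \<and> hd L = I \<and> last L = J \<and>
      (\<forall>X\<in>set L. feasible a n X) \<and>
      (\<forall>i. Suc i < length L \<longrightarrow>
         (\<exists>j k. j \<notin> L ! i \<and> k \<in> L ! i \<and> L ! Suc i = (L ! i \<union> {j}) - {k})))"

text \<open>Piles are lists of indices (top of pile = head of list); the list of
  piles contains exactly the nonempty piles P_0, P_1, ... in order, so "the smallest j with
  P_j empty" corresponds to appending a new pile at the end.\<close>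
fun ps_insert :: "(nat \<Rightarrow> nat) \<Rightarrow> nat \<Rightarrow> nat list list \<Rightarrow> nat list list" where
  "ps_insert a i [] = [[i]]"
| "ps_insert a i (p # ps) = (if a i < a (hd p) then (i # p) # ps else p # ps_insert a i ps)"

definition patience :: "(nat \<Rightarrow> nat) \<Rightarrow> nat \<Rightarrow> nat list list" where
  "patience a n = foldl (\<lambda>P i. ps_insert a i P) [] [0..<Suc n]"

text \<open>a_u is placed strictly below a_v on pile P_p for some 1 <= p <= k: both lie on the same
  pile P_p and a_u was put there before a_v (elements are processed in index order).\<close>
definition placed_below :: "(nat \<Rightarrow> nat) \<Rightarrow> nat \<Rightarrow> nat \<Rightarrow> nat \<Rightarrow> bool" where
  "placed_below a n u v \<longleftrightarrow> (\<exists>p. 1 \<le> p \<and> p < length (patience a n) \<and>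
      u \<in> set (patience a n ! p) \<and> v \<in> set (patience a n ! p) \<and> u < v)"

definition tri :: "(nat \<Rightarrow> nat) \<Rightarrow> nat \<Rightarrow> nat set \<Rightarrow> nat set \<Rightarrow> bool" where
  "tri a n I J \<longleftrightarrow> I \<in> maxfeas a n \<and> J \<in> maxfeas a n \<and>
     (\<exists>u v. I - J = {u} \<and> J - I = {v} \<and> placed_below a n u v)"

inductive_set Mfam :: "(nat \<Rightarrow> nat) \<Rightarrow> nat \<Rightarrow> nat set \<Rightarrow> nat set set"
  for a n I where
  base: "I \<in> Mfam a n I"
| step: "J \<in> Mfam a n I \<Longrightarrow> tri a n J' J \<Longrightarrow> J' \<in> Mfam a n I"

definition tri_minimal :: "(nat \<Rightarrow> nat) \<Rightarrow> nat \<Rightarrow> nat set \<Rightarrow> bool" where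
  "tri_minimal a n I \<longleftrightarrow> I \<in> maxfeas a n \<and> \<not> (\<exists>J\<in>maxfeas a n. tri a n J I)"

definition min_of :: "(nat \<Rightarrow> nat) \<Rightarrow> nat \<Rightarrow> nat set \<Rightarrow> nat set" where
  "min_of a n I = (THE K. K \<in> Mfam a n I \<and> tri_minimal a n K)"

definition tri_equiv :: "(nat \<Rightarrow> nat) \<Rightarrow> nat \<Rightarrow> nat set \<Rightarrow> nat set \<Rightarrow> bool" where
  "tri_equiv a n I J \<longleftrightarrow> min_of a n I = min_of a n J"

end

(*
  Let rank a x be the length of a longest increasing subsequence of a_0, ..., a_x ending in a_x.
  Patience sorting puts a_x on pile P_(rank a x - 1), and along a maximum feasible set the ranks
  are 1, 2, 3, ... in index order. Hence an exchange between two maximum feasible sets swaps two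
  elements of equal rank, i.e. of the same pile, which is not P_0 since a_0 = 0 is alone there:
  reconfiguration steps between maximum feasible sets are exactly the steps of \<lhd> in either
  direction, and reconfigurability is the equivalence closure of \<lhd>.
  Going down along \<lhd> decreases the sum of the indices, and \<lhd> is strongly confluent: two
  exchanges removing different elements commute, two removing the same element are comparable.
  So below every maximum feasible set there is exactly one \<lhd>-minimal set, and two sets are
  connected iff they have a common lower bound iff these minimal sets coincide.
*)
theory Submission
  imports Defs "HOL-Library.Confluence"
begin

section \<open>Reconfiguration sequences\<close>

lemma chain_imp_rtranclp:
  assumes "L \<noteq> []" "\<forall>X\<in>set L. P X" "\<forall>i. Suc i < length L \<longrightarrow> R (L ! i) (L ! Suc i)"
  shows "(\<lambda>X Y. P X \<and> P Y \<and> R X Y)\<^sup>*\<^sup>* (hd L) (last L)"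
  using assms
proof (induction L)
  case (Cons X L)
  show ?case
  proof (cases "L = []")
    case False
    then have "R X (hd L)"
      using Cons.prems(3) by (auto simp: hd_conv_nth)
    moreover have "(\<lambda>X Y. P X \<and> P Y \<and> R X Y)\<^sup>*\<^sup>* (hd L) (last L)"
      using Cons False by (intro Cons.IH) auto
    ultimately show ?thesis
      using Cons.prems(2) False by (auto intro: converse_rtranclp_into_rtranclp)
  qed simp
qed simp

lemma rtranclp_imp_chain:
  assumes "(\<lambda>X Y. P X \<and> P Y \<and> R X Y)\<^sup>*\<^sup>* x y" "P x"
  shows "\<exists>L. L \<noteq> [] \<and> hd L = x \<and> last L = y \<and> (\<forall>X\<in>set L. P X) \<and>
    (\<forall>i. Suc i < length L \<longrightarrow> R (L ! i) (L ! Suc i))"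
  using assms
proof (induction rule: converse_rtranclp_induct)
  case base
  then show ?case
    by (intro exI[of _ "[y]"]) auto
next
  case (step x z)
  then obtain L where L: "L \<noteq> []" "hd L = z" "last L = y" "\<forall>X\<in>set L. P X"
    "\<forall>i. Suc i < length L \<longrightarrow> R (L ! i) (L ! Suc i)"
    by blast
  have "\<forall>i. Suc i < length (x # L) \<longrightarrow> R ((x # L) ! i) ((x # L) ! Suc i)"
    using L(1,2,5) step.hyps(1) by (auto simp: nth_Cons hd_conv_nth split: nat.split)
  then show ?case
    using L step.prems by (intro exI[of _ "x # L"]) auto
qed

lemma chain_iff_rtranclp:
  "(\<exists>L. L \<noteq> [] \<and> hd L = x \<and> last L = y \<and> (\<forall>X\<in>set L. P X) \<and>
      (\<forall>i. Suc i < length L \<longrightarrow> R (L ! i) (L ! Suc i))) \<longleftrightarrow>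
    P x \<and> (\<lambda>X Y. P X \<and> P Y \<and> R X Y)\<^sup>*\<^sup>* x y"
proof
  assume "\<exists>L. L \<noteq> [] \<and> hd L = x \<and> last L = y \<and> (\<forall>X\<in>set L. P X) \<and>
      (\<forall>i. Suc i < length L \<longrightarrow> R (L ! i) (L ! Suc i))"
  then obtain L where "L \<noteq> []" "hd L = x" "last L = y" "\<forall>X\<in>set L. P X"
      "\<forall>i. Suc i < length L \<longrightarrow> R (L ! i) (L ! Suc i)"
    by blast
  then show "P x \<and> (\<lambda>X Y. P X \<and> P Y \<and> R X Y)\<^sup>*\<^sup>* x y"
    using chain_imp_rtranclp[of L P R] by auto
qed (elim conjE, rule rtranclp_imp_chain)

definition reconf_step :: "(nat \<Rightarrow> nat) \<Rightarrow> nat \<Rightarrow> nat set \<Rightarrow> nat set \<Rightarrow> bool" where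
  "reconf_step a n X Y \<longleftrightarrow> feasible a n X \<and> feasible a n Y \<and>
     (\<exists>j k. j \<notin> X \<and> k \<in> X \<and> Y = (X \<union> {j}) - {k})"

lemma reconf_seq_iff_rtranclp:
  "reconf_seq a n I J \<longleftrightarrow> feasible a n I \<and> (reconf_step a n)\<^sup>*\<^sup>* I J"
proof -
  have "reconf_step a n = (\<lambda>X Y. feasible a n X \<and> feasible a n Y \<and>
      (\<exists>j k. j \<notin> X \<and> k \<in> X \<and> Y = (X \<union> {j}) - {k}))"
    by (simp add: fun_eq_iff reconf_step_def)
  then show ?thesis
    unfolding reconf_seq_def
    by (simp only: chain_iff_rtranclp[where R = "\<lambda>X Y. \<exists>j k. j \<notin> X \<and> k \<in> X \<and> Y = (X \<union> {j}) - {k}"])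
qed

section \<open>Longest increasing subsequences ending at a given index\<close>

lemma finite_feasible: "feasible a n S \<Longrightarrow> finite S"
  unfolding feasible_def using finite_subset by blast

lemma feasibleD: "feasible a n X \<Longrightarrow> i \<in> X \<Longrightarrow> j \<in> X \<Longrightarrow> i < j \<Longrightarrow> a i < a j"
  unfolding feasible_def by blast

lemma feasible_le: "feasible a n X \<Longrightarrow> i \<in> X \<Longrightarrow> i \<le> n"
  unfolding feasible_def by auto

lemma maxfeasD:
  "X \<in> maxfeas a n \<Longrightarrow> feasible a n X"
  "X \<in> maxfeas a n \<Longrightarrow> feasible a n Y \<Longrightarrow> card Y \<le> card X"
  unfolding maxfeas_def by auto

lemma maxfeas_exchange:
  assumes "X \<in> maxfeas a n" "feasible a n Y" "j \<notin> X" "k \<in> X" "Y = (X \<union> {j}) - {k}"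
  shows "Y \<in> maxfeas a n"
proof -
  have "card Y = card X"
    using assms finite_feasible[OF maxfeasD(1)] by (auto simp: card_insert_if)
  then show ?thesis
    using assms(1,2) unfolding maxfeas_def by simp
qed

definition rank :: "(nat \<Rightarrow> nat) \<Rightarrow> nat \<Rightarrow> nat" where
  "rank a x = Max (card ` {S. feasible a x S \<and> x \<in> S})"

lemma finite_feasible_ending: "finite {S. feasible a x S \<and> x \<in> S}"
  by (rule finite_subset[of _ "Pow {0..x}"]) (auto simp: feasible_def)

lemma card_le_rank: "feasible a x S \<Longrightarrow> x \<in> S \<Longrightarrow> card S \<le> rank a x"
  unfolding rank_def using finite_feasible_ending by (intro Max_ge) auto

lemma rank_attained: "\<exists>S. feasible a x S \<and> x \<in> S \<and> card S = rank a x"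
proof -
  have "{x} \<in> {S. feasible a x S \<and> x \<in> S}"
    by (auto simp: feasible_def)
  then have "rank a x \<in> card ` {S. feasible a x S \<and> x \<in> S}"
    unfolding rank_def using finite_feasible_ending by (intro Max_in) auto
  then show ?thesis by auto
qed

lemma rank_pos: "0 < rank a x"
  using card_le_rank[of a x "{x}"] by (auto simp: feasible_def)

lemma rank_strict_mono:
  assumes "j < i" "a j < a i"
  shows "rank a j < rank a i"
proof -
  obtain S where S: "feasible a j S" "j \<in> S" "card S = rank a j"
    using rank_attained by blast
  have below: "s \<le> j" "a s \<le> a j" if "s \<in> S" for s
  proof -
    show "s \<le> j"
      using feasible_le[OF S(1) that] .
    then show "a s \<le> a j"
      using feasibleD[OF S(1) that S(2)] by (cases "s = j") auto
  qed
  have "feasible a i (insert i S)"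
    unfolding feasible_def
  proof (intro conjI ballI impI)
    show "insert i S \<subseteq> {0..i}"
      using below(1) assms(1) by fastforce
  next
    fix x y
    assume "x \<in> insert i S" "y \<in> insert i S" "x < y"
    moreover have "x \<noteq> i" if "y \<in> S"
      using below(1)[OF that] assms(1) \<open>x < y\<close> that by auto
    ultimately show "a x < a y"
      using below(2) assms(2) feasibleD[OF S(1)] by (cases "y = i") fastforce+
  qed
  then have "card (insert i S) \<le> rank a i"
    by (rule card_le_rank) simp
  moreover have "i \<notin> S"
    using below(1) assms(1) by force
  ultimately show ?thesis
    using S(3) finite_feasible[OF S(1)] by simp
qed

lemma rank_predecessor:
  assumes "1 < rank a i"
  shows "\<exists>j<i. a j < a i \<and> rank a i = Suc (rank a j)"
proof -
  obtain S where S: "feasible a i S" "i \<in> S" "card S = rank a i"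
    using rank_attained by blast
  define j where "j = Max (S - {i})"
  have fin: "finite S"
    using S(1) by (rule finite_feasible)
  have "S \<noteq> {i}"
    using S(3) assms by auto
  then have ne: "S - {i} \<noteq> {}"
    using S(2) by blast
  then have j: "j \<in> S - {i}" "\<And>s. s \<in> S - {i} \<Longrightarrow> s \<le> j"
    using Max_in[OF finite_Diff[OF fin] ne] Max_ge[OF finite_Diff[OF fin]]
    unfolding j_def by blast+
  have "j < i"
    using feasible_le[OF S(1)] j(1) by force
  have "a j < a i"
    using feasibleD[OF S(1) _ S(2) \<open>j < i\<close>] j(1) by blast
  have "feasible a j (S - {i})"
    using S(1) j(2) unfolding feasible_def by (simp add: subset_iff)
  then have "rank a i \<le> Suc (rank a j)"
    using card_le_rank[of a j "S - {i}"] j(1) S(2,3) fin by simp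
  moreover have "rank a j < rank a i"
    using rank_strict_mono \<open>j < i\<close> \<open>a j < a i\<close> by blast
  ultimately show ?thesis
    using \<open>j < i\<close> \<open>a j < a i\<close> by (intro exI[of _ j]) auto
qed

lemma rank_eq_imp_greater:
  assumes "u < v" "rank a u = rank a v" "a u \<noteq> a v"
  shows "a v < a u"
  using rank_strict_mono[of u v a] assms by fastforce

lemma inj_on_rank_feasible: "feasible a n X \<Longrightarrow> inj_on (rank a) X"
  by (rule inj_onI, rule ccontr)
    (metis feasibleD linorder_neqE_nat order_less_irrefl rank_strict_mono)

lemma feasible_join:
  assumes S: "feasible a x S" "x \<in> S" and X: "feasible a n X" "x \<in> X"
  shows "feasible a n (S \<union> {y\<in>X. x < y})"
  unfolding feasible_def
proof (intro conjI ballI impI)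
  have "x \<le> n"
    using feasible_le[OF X] .
  then show "S \<union> {y\<in>X. x < y} \<subseteq> {0..n}"
    using feasible_le[OF S(1)] feasible_le[OF X(1)] by fastforce
next
  fix p q
  assume pq: "p \<in> S \<union> {y\<in>X. x < y}" "q \<in> S \<union> {y\<in>X. x < y}" "p < q"
  show "a p < a q"
  proof (cases "q \<in> S")
    case True
    then have "p \<in> S"
      using pq feasible_le[OF S(1)] by fastforce
    then show ?thesis
      using feasibleD[OF S(1) _ True pq(3)] by blast
  next
    case False
    then have q: "q \<in> X" "x < q"
      using pq(2) by auto
    have "a p \<le> a x" if "p \<in> S"
      using feasible_le[OF S(1) that] feasibleD[OF S(1) that S(2)] by (cases "p = x") auto
    moreover have "a x < a q"
      using feasibleD[OF X(1) X(2) q(1,2)] .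
    ultimately show ?thesis
      using pq(1,3) q(1) feasibleD[OF X(1)] by fastforce
  qed
qed

lemma card_split_at:
  fixes X :: "'a::linorder set"
  assumes "finite X"
  shows "card X = card {y\<in>X. y \<le> x} + card {y\<in>X. x < y}"
proof -
  have "card X = card ({y\<in>X. y \<le> x} \<union> {y\<in>X. x < y})"
    by (rule arg_cong[where f=card]) auto
  also have "\<dots> = card {y\<in>X. y \<le> x} + card {y\<in>X. x < y}"
    using assms by (intro card_Un_disjoint) auto
  finally show ?thesis .
qed

lemma rank_maxfeas:
  assumes X: "X \<in> maxfeas a n" and x: "x \<in> X"
  shows "rank a x = card {y\<in>X. y \<le> x}"
proof (rule antisym)
  obtain S where S: "feasible a x S" "x \<in> S" "card S = rank a x"
    using rank_attained by blast
  have "feasible a n (S \<union> {y\<in>X. x < y})"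
    using feasible_join[OF S(1,2) maxfeasD(1)[OF X] x] .
  then have "card (S \<union> {y\<in>X. x < y}) \<le> card X"
    by (rule maxfeasD(2)[OF X])
  moreover have "card (S \<union> {y\<in>X. x < y}) = card S + card {y\<in>X. x < y}"
    using finite_feasible[OF S(1)] finite_feasible[OF maxfeasD(1)[OF X]] feasible_le[OF S(1)]
    by (subst card_Un_disjoint) fastforce+
  ultimately show "rank a x \<le> card {y\<in>X. y \<le> x}"
    using S(3) card_split_at[OF finite_feasible[OF maxfeasD(1)[OF X]], of x] by linarith
next
  have "feasible a x {y\<in>X. y \<le> x}"
    using maxfeasD(1)[OF X] unfolding feasible_def by auto
  then show "card {y\<in>X. y \<le> x} \<le> rank a x"
    using card_le_rank x by auto
qed

lemma card_insert_le:
  fixes C :: "'a::linorder set"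
  assumes "finite C" "k \<notin> C"
  shows "card {y\<in>insert k C. y \<le> c} = card {y\<in>C. y \<le> c} + (if k \<le> c then 1 else 0)"
proof (cases "k \<le> c")
  case True
  then have "{y\<in>insert k C. y \<le> c} = insert k {y\<in>C. y \<le> c}"
    by auto
  then show ?thesis
    using True assms by simp
next
  case False
  then have "{y\<in>insert k C. y \<le> c} = {y\<in>C. y \<le> c}"
    by auto
  then show ?thesis
    using False by simp
qed

lemma rank_exchange:
  assumes X: "X \<in> maxfeas a n" and Y: "Y \<in> maxfeas a n"
    and XY: "X - Y = {k}" "Y - X = {j}"
  shows "rank a k = rank a j"
proof -
  (* A common element has the same position in X as in Y, so none lies between k and j. *)
  define C where "C = X \<inter> Y"
  have XC: "X = insert k C" "k \<notin> C" and YC: "Y = insert j C" "j \<notin> C"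
    using XY unfolding C_def by blast+
  have fin: "finite C"
    using finite_feasible[OF maxfeasD(1)[OF X]] XC(1) by simp
  have rank_X: "rank a c = card {y\<in>C. y \<le> c} + (if k \<le> c then 1 else 0)" if "c \<in> X" for c
    using rank_maxfeas[OF X that] card_insert_le[OF fin XC(2)] XC(1) by simp
  have rank_Y: "rank a c = card {y\<in>C. y \<le> c} + (if j \<le> c then 1 else 0)" if "c \<in> Y" for c
    using rank_maxfeas[OF Y that] card_insert_le[OF fin YC(2)] YC(1) by simp
  have "(k \<le> c) = (j \<le> c)" if "c \<in> C" for c
    using rank_X[of c] rank_Y[of c] that XC(1) YC(1) by (simp split: if_splits)
  then have "(c \<le> k) = (c \<le> j)" if "c \<in> C" for c
    using that XC(2) YC(2) by (metis linorder_le_cases order_antisym)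
  then have "{y\<in>C. y \<le> k} = {y\<in>C. y \<le> j}"
    by blast
  then show ?thesis
    using rank_X[of k] rank_Y[of j] XC(1) YC(1) by simp
qed

section \<open>Patience sorting\<close>

(* P stands for the piles P_k, P_(k+1), ... (tops at the heads); the offset k lets the
   invariant follow the recursion of ps_insert. *)
fun ranked_piles :: "(nat \<Rightarrow> nat) \<Rightarrow> nat \<Rightarrow> nat list list \<Rightarrow> bool" where
  "ranked_piles a k [] \<longleftrightarrow> True"
| "ranked_piles a k (p # P) \<longleftrightarrow> p \<noteq> [] \<and> (\<forall>i\<in>set p. rank a i = Suc k \<and> a (hd p) \<le> a i) \<and>
     (\<forall>q\<in>set P. a (hd p) < a (hd q)) \<and> ranked_piles a (Suc k) P"

lemma ranked_piles_nth:
  "ranked_piles a k P \<Longrightarrow> p < length P \<Longrightarrow> i \<in> set (P ! p) \<Longrightarrow> rank a i = Suc (k + p)"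
  by (induction P arbitrary: k p) (auto simp: nth_Cons split: nat.splits)

lemma ranked_piles_hd_le:
  "ranked_piles a k P \<Longrightarrow> j \<in> set (concat P) \<Longrightarrow> a (hd (hd P)) \<le> a j"
proof (induction P arbitrary: k)
  case (Cons p P)
  show ?case
  proof (cases "j \<in> set p")
    case False
    then have "j \<in> set (concat P)" "P \<noteq> []"
      using Cons.prems(2) by auto
    then have "a (hd (hd P)) \<le> a j"
      using Cons by auto
    moreover have "a (hd p) < a (hd (hd P))"
      using Cons.prems(1) \<open>P \<noteq> []\<close> by simp
    ultimately show ?thesis by simp
  qed (use Cons.prems(1) in simp)
qed simp

lemma set_concat_ps_insert: "set (concat (ps_insert a i P)) = insert i (set (concat P))"
  by (induction P) auto

lemma hd_ps_insert: "hd ` set (ps_insert a i P) \<subseteq> insert i (hd ` set P)"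
  by (induction P) auto

lemma rank_le_Suc_if_below:
  assumes "\<And>j. j < m \<Longrightarrow> a j < a m \<Longrightarrow> rank a j \<le> k"
  shows "rank a m \<le> Suc k"
proof (cases "1 < rank a m")
  case True
  then obtain j where "j < m" "a j < a m" "rank a m = Suc (rank a j)"
    using rank_predecessor by blast
  then show ?thesis
    using assms by simp
qed simp

(* The hypotheses on m are what passing the piles P_0, ..., P_(k-1) guarantees. *)
lemma ranked_piles_ps_insert:
  assumes "ranked_piles a k P"
    and "k < rank a m"
    and "\<And>j. j < m \<Longrightarrow> a j < a m \<Longrightarrow> rank a j \<le> k \<or> j \<in> set (concat P)"
    and "\<And>j. j \<in> set (concat P) \<Longrightarrow> j < m \<and> a j \<noteq> a m"
  shows "ranked_piles a k (ps_insert a m P)"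
  using assms
proof (induction P arbitrary: k)
  case Nil
  then have "rank a m \<le> Suc k"
    by (intro rank_le_Suc_if_below) auto
  then have "rank a m = Suc k"
    using Nil.prems(2) by simp
  then show ?case by simp
next
  case (Cons p P)
  show ?case
  proof (cases "a m < a (hd p)")
    case True
    have "rank a j \<le> k" if "j < m" "a j < a m" for j
      using Cons.prems(3)[OF that] ranked_piles_hd_le[OF Cons.prems(1)] True that(2) by fastforce
    then have "rank a m \<le> Suc k"
      by (rule rank_le_Suc_if_below)
    then have "rank a m = Suc k"
      using Cons.prems(2) by simp
    moreover have "a m \<le> a i" if "i \<in> set p" for i
      using Cons.prems(1) True that by fastforce
    moreover have "a m < a (hd q)" if "q \<in> set P" for q
      using Cons.prems(1) True that by fastforce
    ultimately show ?thesis
      using True Cons.prems(1) by simp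
  next
    case False
    have p: "p \<noteq> []" "rank a (hd p) = Suc k" and "ranked_piles a (Suc k) P"
      using Cons.prems(1) by auto
    then have "hd p < m" "a (hd p) \<noteq> a m"
      using Cons.prems(4)[of "hd p"] by auto
    then have less: "a (hd p) < a m"
      using False by simp
    have "ranked_piles a (Suc k) (ps_insert a m P)"
    proof (rule Cons.IH)
      show "Suc k < rank a m"
        using rank_strict_mono[OF \<open>hd p < m\<close> less] p(2) by simp
      show "rank a j \<le> Suc k \<or> j \<in> set (concat P)" if "j < m" "a j < a m" for j
        using Cons.prems(3)[OF that] Cons.prems(1) by auto
      show "j < m \<and> a j \<noteq> a m" if "j \<in> set (concat P)" for j
        using Cons.prems(4) that by simp
    qed fact
    moreover have "a (hd p) < a (hd q)" if "q \<in> set (ps_insert a m P)" for q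
      using hd_ps_insert[of a m P] that less Cons.prems(1) by auto
    ultimately show ?thesis
      using False Cons.prems(1) by simp
  qed
qed

lemma ranked_piles_patience:
  assumes "inj_on a {0..n}"
  shows "ranked_piles a 0 (patience a n) \<and> set (concat (patience a n)) = {0..n}"
proof -
  have "ranked_piles a 0 (foldl (\<lambda>P i. ps_insert a i P) [] [0..<m]) \<and>
      set (concat (foldl (\<lambda>P i. ps_insert a i P) [] [0..<m])) = {..<m}" if "m \<le> Suc n" for m
    using that
  proof (induction m)
    case (Suc m)
    define P where "P = foldl (\<lambda>P i. ps_insert a i P) [] [0..<m]"
    have IH: "ranked_piles a 0 P" "set (concat P) = {..<m}"
      using Suc unfolding P_def by auto
    have "a j \<noteq> a m" if "j < m" for j
      using inj_onD[OF assms, of j m] that Suc.prems by auto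
    then have "ranked_piles a 0 (ps_insert a m P)"
      using IH by (intro ranked_piles_ps_insert) (auto simp: rank_pos)
    then show ?case
      using IH(2) set_concat_ps_insert[of a m P] unfolding P_def by auto
  qed simp
  from this[of "Suc n"] show ?thesis
    unfolding patience_def by (simp only: lessThan_Suc_atMost atLeast0AtMost order_refl)
qed

lemma in_set_concat_nth: "x \<in> set (concat P) \<Longrightarrow> \<exists>p<length P. x \<in> set (P ! p)"
  by (metis UN_E in_set_conv_nth set_concat)

lemma placed_below_if_rank_eq:
  assumes "inj_on a {0..n}" "u < v" "v \<le> n" "rank a u = rank a v" "1 < rank a u"
  shows "placed_below a n u v"
proof -
  have P: "ranked_piles a 0 (patience a n)" "set (concat (patience a n)) = {0..n}"
    using ranked_piles_patience[OF assms(1)] by auto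
  have "u \<in> set (concat (patience a n))" "v \<in> set (concat (patience a n))"
    unfolding P(2) using assms(2,3) by auto
  then obtain p q where
    p: "p < length (patience a n)" "u \<in> set (patience a n ! p)" and
    q: "q < length (patience a n)" "v \<in> set (patience a n ! q)"
    using in_set_concat_nth by metis
  have "p = q" "1 \<le> p"
    using ranked_piles_nth[OF P(1) p] ranked_piles_nth[OF P(1) q] assms(4,5) by auto
  then show ?thesis
    unfolding placed_below_def using p q assms(2) by blast
qed

section \<open>Exchanges between maximum feasible sets\<close>

lemma diff_singletonsD:
  assumes "X - Y = {u}" "Y - X = {v}"
  shows "Y = insert v (X - {u})" "u \<in> X" "u \<notin> Y" "v \<in> Y" "v \<notin> X"
  using assms by blast+

lemma reconf_step_if_diff_singletons:
  assumes "feasible a n X" "feasible a n Y" "X - Y = {u}" "Y - X = {v}"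
  shows "reconf_step a n X Y"
  unfolding reconf_step_def using assms diff_singletonsD[OF assms(3,4)] by blast

lemma tri_imp_reconf_step:
  assumes "tri a n X Y"
  shows "reconf_step a n X Y" "reconf_step a n Y X"
proof -
  obtain u v where "X - Y = {u}" "Y - X = {v}" "feasible a n X" "feasible a n Y"
    using assms unfolding tri_def by (auto dest: maxfeasD(1))
  then show "reconf_step a n X Y" "reconf_step a n Y X"
    by (auto intro: reconf_step_if_diff_singletons)
qed

lemma sum_less_if_diff_singletons:
  fixes X Y :: "'a::ordered_cancel_comm_monoid_add set"
  assumes "finite X" "X - Y = {u}" "Y - X = {v}" "u < v"
  shows "\<Sum>X < \<Sum>Y"
proof -
  note XY = diff_singletonsD[OF assms(2,3)]
  have "\<Sum>X = u + \<Sum>(X - {u})"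
    using assms(1) XY(2) by (simp add: sum.remove)
  also have "\<dots> < v + \<Sum>(X - {u})"
    using assms(4) by (rule add_strict_right_mono)
  also have "\<dots> = \<Sum>Y"
    using assms(1) XY(1,5) by simp
  finally show ?thesis .
qed

lemma tri_sum_less: "tri a n X Y \<Longrightarrow> \<Sum>X < \<Sum>Y"
  unfolding tri_def placed_below_def
  by (auto intro: sum_less_if_diff_singletons finite_feasible maxfeasD(1))

lemma Mfam_iff_rtranclp: "K \<in> Mfam a n I \<longleftrightarrow> (tri a n)\<^sup>*\<^sup>* K I"
proof
  show "K \<in> Mfam a n I \<Longrightarrow> (tri a n)\<^sup>*\<^sup>* K I"
    by (induction rule: Mfam.induct) (auto intro: converse_rtranclp_into_rtranclp)
  show "(tri a n)\<^sup>*\<^sup>* K I \<Longrightarrow> K \<in> Mfam a n I"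
    by (induction rule: converse_rtranclp_induct) (auto intro: Mfam.intros)
qed

lemma maxfeas_if_rtranclp_tri:
  assumes "(tri a n)\<^sup>*\<^sup>* K I" "I \<in> maxfeas a n"
  shows "K \<in> maxfeas a n"
  using assms(1) by (cases rule: converse_rtranclpE) (auto simp: tri_def assms(2))

lemma rtranclp_tri_minimal:
  assumes "(tri a n)\<^sup>*\<^sup>* J K" "tri_minimal a n K"
  shows "J = K"
  using assms(1)
proof (cases rule: rtranclp.cases)
  case (rtrancl_into_rtrancl J')
  then show ?thesis
    using assms(2) unfolding tri_minimal_def tri_def by blast
qed simp

lemma exists_tri_minimal:
  "I \<in> maxfeas a n \<Longrightarrow> \<exists>K. (tri a n)\<^sup>*\<^sup>* K I \<and> tri_minimal a n K"
proof (induction I rule: measure_induct_rule[where f = "\<lambda>I. \<Sum>I"])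
  case (less I)
  show ?case
  proof (cases "tri_minimal a n I")
    case False
    then obtain J where J: "tri a n J I"
      using less.prems unfolding tri_minimal_def by blast
    then have "J \<in> maxfeas a n"
      unfolding tri_def by blast
    then obtain K where "(tri a n)\<^sup>*\<^sup>* K J" "tri_minimal a n K"
      using less.IH[OF tri_sum_less[OF J]] by blast
    then show ?thesis
      using J by (blast intro: rtranclp.rtrancl_into_rtrancl)
  qed blast
qed

section \<open>Confluence of the exchange order\<close>

locale patience_sequence =
  fixes a :: "nat \<Rightarrow> nat" and n :: nat
  assumes inj: "inj_on a {0..n}"
    and sentinel_least: "\<And>i. 0 < i \<Longrightarrow> i \<le> n \<Longrightarrow> a 0 < a i"
begin

lemma one_less_rank:
  assumes "0 < i" "i \<le> n"
  shows "1 < rank a i"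
  using rank_strict_mono[OF assms(1) sentinel_least[OF assms]] rank_pos[of a 0] by simp

lemma tri_iff:
  "tri a n X Y \<longleftrightarrow> X \<in> maxfeas a n \<and> Y \<in> maxfeas a n \<and>
     (\<exists>u v. X - Y = {u} \<and> Y - X = {v} \<and> u < v)"
proof
  assume "X \<in> maxfeas a n \<and> Y \<in> maxfeas a n \<and> (\<exists>u v. X - Y = {u} \<and> Y - X = {v} \<and> u < v)"
  then obtain u v where X: "X \<in> maxfeas a n" and Y: "Y \<in> maxfeas a n"
    and uv: "X - Y = {u}" "Y - X = {v}" "u < v"
    by blast
  have "v \<le> n"
    using feasible_le[OF maxfeasD(1)[OF Y]] uv(2) by blast
  moreover have "rank a u = rank a v"
    using rank_exchange[OF X Y uv(1,2)] .
  ultimately have "placed_below a n u v"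
    using placed_below_if_rank_eq[OF inj uv(3)] one_less_rank[of v] uv(3) by simp
  then show "tri a n X Y"
    unfolding tri_def using X Y uv by blast
qed (auto simp: tri_def placed_below_def)

lemma reconf_step_iff_symclp_tri:
  assumes "X \<in> maxfeas a n"
  shows "reconf_step a n X Y \<longleftrightarrow> symclp (tri a n) X Y"
proof
  assume "reconf_step a n X Y"
  then obtain j k where jk: "feasible a n Y" "j \<notin> X" "k \<in> X" "Y = (X \<union> {j}) - {k}"
    unfolding reconf_step_def by blast
  then have "Y \<in> maxfeas a n"
    by (intro maxfeas_exchange[OF assms])
  moreover have "X - Y = {k}" "Y - X = {j}" "j \<noteq> k"
    using jk(2-4) by auto
  ultimately show "symclp (tri a n) X Y"
    using assms by (cases "k < j") (auto simp: tri_iff symclp_def)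
qed (auto elim: symclpE intro: tri_imp_reconf_step)

lemma rtranclp_reconf_step_iff_equivclp:
  assumes "X \<in> maxfeas a n"
  shows "(reconf_step a n)\<^sup>*\<^sup>* X Y \<longleftrightarrow> equivclp (tri a n) X Y"
proof
  assume "(reconf_step a n)\<^sup>*\<^sup>* X Y"
  then have "Y \<in> maxfeas a n \<and> equivclp (tri a n) X Y"
  proof (induction rule: rtranclp_induct)
    case (step Y Z)
    then have "symclp (tri a n) Y Z"
      using reconf_step_iff_symclp_tri by blast
    then show ?case
      using step.IH by (auto elim!: symclpE intro: equivclp_into_equivclp simp: tri_def)
  qed (simp add: assms)
  then show "equivclp (tri a n) X Y" ..
next
  assume "equivclp (tri a n) X Y"
  then show "(reconf_step a n)\<^sup>*\<^sup>* X Y"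
    unfolding equivclp_def
    by (rule rtranclp_mono[THEN predicate2D, rotated])
      (auto elim: symclpE intro: tri_imp_reconf_step)
qed

lemma exchange_order:
  assumes max: "I \<in> maxfeas a n" "J1 \<in> maxfeas a n" "J2 \<in> maxfeas a n"
    and J1: "J1 - I = {u1}" "I - J1 = {v1}"
    and J2: "J2 - I = {u2}" "I - J2 = {v2}" "u2 < v2"
    and "v1 \<noteq> v2" "u1 < u2"
  shows "a u1 < a u2"
proof -
  note J1D = diff_singletonsD[OF J1(2,1)] and J2D = diff_singletonsD[OF J2(2,1)]
  have "v2 \<in> J1" "u1 \<in> J1"
    using J1D(1) J2D(2) J1D(4) \<open>v1 \<noteq> v2\<close> by simp_all
  moreover have "u1 < v2"
    using \<open>u1 < u2\<close> J2(3) by simp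
  ultimately have "a u1 < a v2"
    using feasibleD[OF maxfeasD(1)[OF max(2)]] by blast
  moreover have "a u2 \<noteq> a v2"
  proof
    assume "a u2 = a v2"
    moreover have "u2 \<le> n" "v2 \<le> n"
      using feasible_le[OF maxfeasD(1)[OF max(3)] J2D(4)]
        feasible_le[OF maxfeasD(1)[OF max(1)] J2D(2)] .
    ultimately have "u2 = v2"
      using inj_onD[OF inj] by simp
    then show False
      using J2(3) by simp
  qed
  then have "a v2 < a u2"
    using rank_eq_imp_greater[OF J2(3) rank_exchange[OF max(3,1) J2(1,2)]] by blast
  ultimately show ?thesis by simp
qed

lemma tri_diamond:
  assumes "tri a n J1 I" "tri a n J2 I" "I - J1 \<noteq> I - J2"
  shows "\<exists>K. tri a n K J1 \<and> tri a n K J2"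
proof -
  obtain u1 v1 u2 v2 where max: "I \<in> maxfeas a n" "J1 \<in> maxfeas a n" "J2 \<in> maxfeas a n"
    and J1: "J1 - I = {u1}" "I - J1 = {v1}" "u1 < v1"
    and J2: "J2 - I = {u2}" "I - J2 = {v2}" "u2 < v2"
    using assms(1,2) unfolding tri_iff by (elim conjE exE) (rule that, assumption+)
  note J1D = diff_singletonsD[OF J1(2,1)] and J2D = diff_singletonsD[OF J2(2,1)]
  note elems = J1D(2,5) J2D(2,5)
  have "v1 \<noteq> v2"
    using assms(3) J1(2) J2(2) by simp
  then have "rank a v1 \<noteq> rank a v2"
    using inj_onD[OF inj_on_rank_feasible[OF maxfeasD(1)[OF max(1)]]] J1D(2) J2D(2) by blast
  then have "u1 \<noteq> u2"
    using rank_exchange[OF max(2,1) J1(1,2)] rank_exchange[OF max(3,1) J2(1,2)] by auto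
  define K where "K = insert u1 (insert u2 (I - {v1, v2}))"
  have K_sub: "K - {u2} \<subseteq> J1" "K - {u1} \<subseteq> J2"
    unfolding K_def J1D(1) J2D(1) by auto
  have "feasible a n K"
    unfolding feasible_def
  proof (intro conjI ballI impI)
    have "K \<subseteq> J1 \<union> J2"
      unfolding K_def J1D(1) J2D(1) by auto
    then show "K \<subseteq> {0..n}"
      using feasible_le[OF maxfeasD(1)[OF max(2)]] feasible_le[OF maxfeasD(1)[OF max(3)]] by auto
  next
    fix x y
    assume xy: "x \<in> K" "y \<in> K" "x < y"
    then consider "x \<in> J1" "y \<in> J1" | "x \<in> J2" "y \<in> J2" | "x = u1" "y = u2" | "x = u2" "y = u1"
      using K_sub \<open>u1 \<noteq> u2\<close> by blast
    then show "a x < a y"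
    proof cases
      case 1
      then show ?thesis using feasibleD[OF maxfeasD(1)[OF max(2)]] xy(3) by blast
    next
      case 2
      then show ?thesis using feasibleD[OF maxfeasD(1)[OF max(3)]] xy(3) by blast
    next
      case 3
      then show ?thesis using exchange_order[OF max J1(1,2) J2 \<open>v1 \<noteq> v2\<close>] xy(3) by simp
    next
      case 4
      then show ?thesis using exchange_order[OF max(1,3,2) J2(1,2) J1] \<open>v1 \<noteq> v2\<close> xy(3) by simp
    qed
  qed
  moreover have "K = (J1 \<union> {u2}) - {v2}"
    unfolding K_def J1D(1) using elems \<open>v1 \<noteq> v2\<close> \<open>u1 \<noteq> u2\<close> by auto
  moreover have "u2 \<notin> J1" "v2 \<in> J1"
    unfolding J1D(1) using elems \<open>v1 \<noteq> v2\<close> \<open>u1 \<noteq> u2\<close> by auto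
  ultimately have "K \<in> maxfeas a n"
    using maxfeas_exchange[OF max(2) \<open>feasible a n K\<close>] by simp
  moreover have "K - J1 = {u2}" "J1 - K = {v2}" "K - J2 = {u1}" "J2 - K = {v1}"
    unfolding K_def J1D(1) J2D(1) using elems \<open>v1 \<noteq> v2\<close> \<open>u1 \<noteq> u2\<close> by auto
  ultimately show ?thesis
    using max J1(3) J2(3) unfolding tri_iff by blast
qed

lemma tri_same_removed:
  assumes "tri a n J1 I" "tri a n J2 I" "I - J1 = I - J2"
  shows "J1 = J2 \<or> tri a n J1 J2 \<or> tri a n J2 J1"
proof -
  obtain u1 v u2 where max: "J1 \<in> maxfeas a n" "J2 \<in> maxfeas a n"
    and J1: "J1 - I = {u1}" "I - J1 = {v}" and J2: "J2 - I = {u2}" "I - J2 = {v}"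
    using assms unfolding tri_iff by (elim conjE exE) (rule that, assumption+, simp)
  note J1D = diff_singletonsD[OF J1(2,1)] and J2D = diff_singletonsD[OF J2(2,1)]
  consider "u1 = u2" | "u1 < u2" | "u2 < u1"
    by linarith
  then show ?thesis
  proof cases
    case 1
    then show ?thesis
      using J1D(1) J2D(1) by simp
  next
    case 2
    have "J1 - J2 = {u1}" "J2 - J1 = {u2}"
      unfolding J1D(1) J2D(1) using J1D(5) J2D(5) 2 by auto
    then show ?thesis
      using max 2 unfolding tri_iff by blast
  next
    case 3
    have "J1 - J2 = {u1}" "J2 - J1 = {u2}"
      unfolding J1D(1) J2D(1) using J1D(5) J2D(5) 3 by auto
    then show ?thesis
      using max 3 unfolding tri_iff by blast
  qed
qed

lemma strong_confluentp_tri: "strong_confluentp (tri a n)\<inverse>\<inverse>"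
proof
  fix I J1 J2
  assume "(tri a n)\<inverse>\<inverse> I J1" "(tri a n)\<inverse>\<inverse> I J2"
  then have tri: "tri a n J1 I" "tri a n J2 I"
    by simp_all
  show "\<exists>K. (tri a n)\<inverse>\<inverse>\<^sup>*\<^sup>* J1 K \<and> (tri a n)\<inverse>\<inverse>\<^sup>=\<^sup>= J2 K"
  proof (cases "I - J1 = I - J2")
    case True
    then show ?thesis
      using tri_same_removed[OF tri True] by blast
  next
    case False
    then show ?thesis
      using tri_diamond[OF tri False] by blast
  qed
qed

lemma tri_minimal_unique:
  assumes "(tri a n)\<^sup>*\<^sup>* K1 I" "(tri a n)\<^sup>*\<^sup>* K2 I" "tri_minimal a n K1" "tri_minimal a n K2"
  shows "K1 = K2"
proof -
  have "confluentp (tri a n)\<inverse>\<inverse>"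
    using strong_confluentp_tri by (rule strong_confluentp_imp_confluentp)
  then obtain K where "(tri a n)\<^sup>*\<^sup>* K K1" "(tri a n)\<^sup>*\<^sup>* K K2"
    using assms(1,2) confluentpD[of "(tri a n)\<inverse>\<inverse>" I K1 K2] by (auto simp: rtranclp_conversep)
  then show ?thesis
    using rtranclp_tri_minimal assms(3,4) by metis
qed

lemma min_of_eqI:
  assumes "(tri a n)\<^sup>*\<^sup>* K I" "tri_minimal a n K"
  shows "min_of a n I = K"
  unfolding min_of_def Mfam_iff_rtranclp
  by (rule the_equality) (use assms tri_minimal_unique in blast)+

lemma tri_equiv_iff_joinable:
  assumes "I \<in> maxfeas a n" "J \<in> maxfeas a n"
  shows "tri_equiv a n I J \<longleftrightarrow> (\<exists>K. (tri a n)\<^sup>*\<^sup>* K I \<and> (tri a n)\<^sup>*\<^sup>* K J)"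
proof
  assume "tri_equiv a n I J"
  obtain K where K: "(tri a n)\<^sup>*\<^sup>* K I" "tri_minimal a n K"
    using exists_tri_minimal[OF assms(1)] by blast
  obtain K' where K': "(tri a n)\<^sup>*\<^sup>* K' J" "tri_minimal a n K'"
    using exists_tri_minimal[OF assms(2)] by blast
  have "K = K'"
    using \<open>tri_equiv a n I J\<close> min_of_eqI[OF K] min_of_eqI[OF K'] unfolding tri_equiv_def by simp
  then show "\<exists>K. (tri a n)\<^sup>*\<^sup>* K I \<and> (tri a n)\<^sup>*\<^sup>* K J"
    using K(1) K'(1) by blast
next
  assume "\<exists>K. (tri a n)\<^sup>*\<^sup>* K I \<and> (tri a n)\<^sup>*\<^sup>* K J"
  then obtain K where K: "(tri a n)\<^sup>*\<^sup>* K I" "(tri a n)\<^sup>*\<^sup>* K J"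
    by blast
  obtain M where "(tri a n)\<^sup>*\<^sup>* M K" "tri_minimal a n M"
    using exists_tri_minimal maxfeas_if_rtranclp_tri[OF K(1) assms(1)] by blast
  then have "min_of a n I = M" "min_of a n J = M"
    using K by (meson min_of_eqI rtranclp_trans)+
  then show "tri_equiv a n I J"
    unfolding tri_equiv_def by simp
qed

lemma equivclp_tri_iff_joinable:
  "equivclp (tri a n) I J \<longleftrightarrow> (\<exists>K. (tri a n)\<^sup>*\<^sup>* K I \<and> (tri a n)\<^sup>*\<^sup>* K J)"
proof -
  have "equivclp (tri a n) = equivclp (tri a n)\<inverse>\<inverse>"
    by simp
  also have "\<dots> = (tri a n)\<inverse>\<inverse>\<^sup>*\<^sup>* OO (tri a n)\<^sup>*\<^sup>*"
    using semiconfluentp_equivclp[OF strong_confluentp_into_semiconfluentp[OF strong_confluentp_tri]]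
    by simp
  finally show ?thesis
    by (auto simp: rtranclp_conversep)
qed

end

lemma patience_sequenceI:
  assumes "a 0 = 0" "a ` {1..n} \<subseteq> {1..n}" "inj_on a {1..n}"
  shows "patience_sequence a n"
proof
  have "a 0 \<notin> a ` {1..n}" "{0..n} = insert 0 {1..n}"
    using assms(1,2) by auto
  then show "inj_on a {0..n}"
    using assms(3) by simp
next
  fix i
  assume "0 < i" "i \<le> n"
  then have "a i \<in> {1..n}"
    using assms(2) by (auto simp: image_subset_iff)
  then show "a 0 < a i"
    using assms(1) by simp
qed

theorem lemma3:
  fixes a :: "nat \<Rightarrow> nat" and n :: nat and I J :: "nat set"
  assumes "a 0 = 0"
    and "a ` {1..n} \<subseteq> {1..n}"
    and "inj_on a {1..n}"
    and "I \<in> maxfeas a n"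
    and "J \<in> maxfeas a n"
  shows "reconf_seq a n I J \<longleftrightarrow> tri_equiv a n I J"
proof -
  interpret patience_sequence a n
    using patience_sequenceI[OF assms(1-3)] .
  have "reconf_seq a n I J \<longleftrightarrow> (reconf_step a n)\<^sup>*\<^sup>* I J"
    using reconf_seq_iff_rtranclp maxfeasD(1)[OF assms(4)] by blast
  also have "\<dots> \<longleftrightarrow> equivclp (tri a n) I J"
    using rtranclp_reconf_step_iff_equivclp[OF assms(4)] .
  also have "\<dots> \<longleftrightarrow> (\<exists>K. (tri a n)\<^sup>*\<^sup>* K I \<and> (tri a n)\<^sup>*\<^sup>* K J)"
    by (rule equivclp_tri_iff_joinable)
  also have "\<dots> \<longleftrightarrow> tri_equiv a n I J"
    using tri_equiv_iff_joinable[OF assms(4,5)] by simp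
  finally show ?thesis .
qed

end
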